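(* Let $a>0$ and let $F$ be a smooth function on $\mathbb H^2(-a^2)$; set $f=F\circ Y^{-1}$ on the Euclidean unit disc $D_O(1)$. Then, provided the right-hand side is finite, $$\|\overline\nabla(\nabla F)\|_{L^2(\mathbb H^2(-a^2))}^2\le 10a^2\int_{D_O(1)}\Big\{|\nabla^{\mathbb R^2}f|^2+(1-|y|^2)^2|\nabla^{\mathbb R^2}\nabla^{\mathbb R^2}f|^2\Big\}\,dy_1\,dy_2,$$ where $|\nabla^{\mathbb R^2}\nabla^{\mathbb R^2}f|^2=\sum_{i,j=1}^2|\partial_{y_i}\partial_{y_j}f|^2$.
   Context: $\mathbb H^2(-a^2)$ is realized as the hyperboloid $\{(x_0,x_1,x_2)\in\mathbb R^3: x_0^2-x_1^2-x_2^2=1/a^2,\ x_0>0\}$ with the metric induced by $-dx_0^2+dx_1^2+dx_2^2$; it is the two-dimensional hyperbolic space of constant curvature $-a^2$. $Y:\mathbb H^2(-a^2)\to D_O(1)=\{y\in\mathbb R^2:|y|<1\}$ is the global coordinate chart $Y(x)=(x_1,x_2)/(x_0+1/a)$, in which the metric is $g=\frac{4}{a^2(1-|y|^2)^2}(dy_1^2+dy_2^2)$. $\nabla F$ is the Riemannian gradient vector field of $F$, $\overline\nabla$ the Levi-Civita connection, and $|\overline\nabla(\nabla F)|$ the pointwise norm of this $(1,1)$-tensor with respect to the induced metric; $L^2$ is with respect to the Riemannian volume. $\nabla^{\mathbb R^2}$ denotes the Euclidean gradient on $D_O(1)$. *)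

theory Defs
  imports "HOL-Analysis.Analysis"
begin

definition hyperboloid :: "real \<Rightarrow> (real \<times> real \<times> real) set" where
  "hyperboloid a = {(x0, x1, x2). x0\<^sup>2 - x1\<^sup>2 - x2\<^sup>2 = 1 / a\<^sup>2 \<and> x0 > 0}"

definition chartY :: "real \<Rightarrow> real \<times> real \<times> real \<Rightarrow> real \<times> real" where
  "chartY a x = (case x of (x0, x1, x2) \<Rightarrow> (x1 / (x0 + 1 / a), x2 / (x0 + 1 / a)))"

definition unit_disc :: "(real \<times> real) set" where
  "unit_disc = {y. (fst y)\<^sup>2 + (snd y)\<^sup>2 < 1}"

definition pd :: "nat \<Rightarrow> (real \<times> real \<Rightarrow> real) \<Rightarrow> real \<times> real \<Rightarrow> real" where
  "pd i g y = (if i = 1 then deriv (\<lambda>t. g (t, snd y)) (fst y)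
               else deriv (\<lambda>t. g (fst y, t)) (snd y))"

definition has_pd :: "nat \<Rightarrow> (real \<times> real \<Rightarrow> real) \<Rightarrow> real \<times> real \<Rightarrow> bool" where
  "has_pd i g y = (if i = 1 then (\<lambda>t. g (t, snd y)) differentiable (at (fst y))
                   else (\<lambda>t. g (fst y, t)) differentiable (at (snd y)))"

fun iter_pd :: "nat list \<Rightarrow> (real \<times> real \<Rightarrow> real) \<Rightarrow> real \<times> real \<Rightarrow> real" where
  "iter_pd [] g = g"
| "iter_pd (i # ds) g = pd i (iter_pd ds g)"

definition smooth_on :: "(real \<times> real) set \<Rightarrow> (real \<times> real \<Rightarrow> real) \<Rightarrow> bool" where
  "smooth_on S g = (\<forall>ds. set ds \<subseteq> {1, 2} \<longrightarrow>
      continuous_on S (iter_pd ds g) \<and> (\<forall>i\<in>{1, 2}. \<forall>y\<in>S. has_pd i (iter_pd ds g) y))"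

definition hmetric :: "real \<Rightarrow> nat \<Rightarrow> nat \<Rightarrow> real \<times> real \<Rightarrow> real" where
  "hmetric a i j y = (if i = j then 4 / (a\<^sup>2 * (1 - ((fst y)\<^sup>2 + (snd y)\<^sup>2))\<^sup>2) else 0)"

definition hmetric_inv :: "real \<Rightarrow> nat \<Rightarrow> nat \<Rightarrow> real \<times> real \<Rightarrow> real" where
  "hmetric_inv a i j y = (if i = j then (a\<^sup>2 * (1 - ((fst y)\<^sup>2 + (snd y)\<^sup>2))\<^sup>2) / 4 else 0)"

definition christoffel :: "real \<Rightarrow> nat \<Rightarrow> nat \<Rightarrow> nat \<Rightarrow> real \<times> real \<Rightarrow> real" where
  "christoffel a k i j y = (1/2) * (\<Sum>l\<in>{1,2}. hmetric_inv a k l y *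
      (pd i (hmetric a j l) y + pd j (hmetric a i l) y - pd l (hmetric a i j) y))"

definition cov_hess :: "real \<Rightarrow> (real \<times> real \<Rightarrow> real) \<Rightarrow> nat \<Rightarrow> nat \<Rightarrow> real \<times> real \<Rightarrow> real" where
  "cov_hess a f i j y = pd i (pd j f) y - (\<Sum>k\<in>{1,2}. christoffel a k i j y * pd k f y)"

text \<open>(1,1)-tensor nabla(grad F): A^i_j = g^ik (nabla dF)_kj.\<close>
definition hess11 :: "real \<Rightarrow> (real \<times> real \<Rightarrow> real) \<Rightarrow> nat \<Rightarrow> nat \<Rightarrow> real \<times> real \<Rightarrow> real" where
  "hess11 a f i j y = (\<Sum>k\<in>{1,2}. hmetric_inv a i k y * cov_hess a f k j y)"

definition hess11_normsq :: "real \<Rightarrow> (real \<times> real \<Rightarrow> real) \<Rightarrow> real \<times> real \<Rightarrow> real" where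
  "hess11_normsq a f y = (\<Sum>i\<in>{1,2}. \<Sum>j\<in>{1,2}. \<Sum>k\<in>{1,2}. \<Sum>l\<in>{1,2}.
      hmetric a i k y * hmetric_inv a j l y * hess11 a f i j y * hess11 a f k l y)"

definition vol_density :: "real \<Rightarrow> real \<times> real \<Rightarrow> real" where
  "vol_density a y = sqrt (hmetric a 1 1 y * hmetric a 2 2 y - hmetric a 1 2 y * hmetric a 2 1 y)"

definition eucl_grad_sq :: "(real \<times> real \<Rightarrow> real) \<Rightarrow> real \<times> real \<Rightarrow> real" where
  "eucl_grad_sq f y = (\<Sum>i\<in>{1,2}. (pd i f y)\<^sup>2)"

definition eucl_hess_sq :: "(real \<times> real \<Rightarrow> real) \<Rightarrow> real \<times> real \<Rightarrow> real" where
  "eucl_hess_sq f y = (\<Sum>i\<in>{1,2}. \<Sum>j\<in>{1,2}. (pd i (pd j f) y)\<^sup>2)"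

end

theory Submission
  imports Defs
begin

text \<open>In the chart Y the metric is conformal, g = lambda^2 (dy1^2 + dy2^2) with
  lambda = 2 / (a w) and w = 1 - |y|^2. Hence the Christoffel symbols are
  Gamma^k_ij = (2/w) (delta_jk y_i + delta_ik y_j - delta_ij y_k), and the integrand
  |nabla(grad F)|^2 sqrt(det g) equals (a^2/4) sum_ij (w H_ij)^2, where H is the covariant
  Hessian. Each w H_ij is w d_i d_j f minus twice a first order term of size at most |y| |grad f|,
  so (x - y)^2 <= 2 x^2 + 2 y^2 bounds the integrand pointwise, and integration finishes.\<close>

lemma conformal_factor_has_derivative:
  assumes "a \<noteq> 0" "1 - (x\<^sup>2 + c) \<noteq> 0"
  shows "((\<lambda>t. 4 / (a\<^sup>2 * (1 - (t\<^sup>2 + c))\<^sup>2)) has_real_derivative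
           16 * x / (a\<^sup>2 * (1 - (x\<^sup>2 + c)) ^ 3)) (at x)"
proof -
  have "W \<noteq> 0 \<Longrightarrow> 16 * (x * W) / (W\<^sup>2 * (a\<^sup>2 * W\<^sup>2)) = 16 * x / (a\<^sup>2 * W ^ 3)" for W :: real
    by (simp add: power2_eq_square power3_eq_cube)
  with assms show ?thesis
    by (auto intro!: derivative_eq_intros)
qed

lemma hmetric_disc:
  "w = 1 - (u\<^sup>2 + v\<^sup>2) \<Longrightarrow> hmetric a k l (u, v) = (if k = l then 4 / (a\<^sup>2 * w\<^sup>2) else 0)"
  by (simp add: hmetric_def)

lemma hmetric_inv_disc:
  "w = 1 - (u\<^sup>2 + v\<^sup>2) \<Longrightarrow> hmetric_inv a k l (u, v) = (if k = l then a\<^sup>2 * w\<^sup>2 / 4 else 0)"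
  by (simp add: hmetric_inv_def)

lemma pd_hmetric_disc:
  assumes "a \<noteq> 0" "u\<^sup>2 + v\<^sup>2 < 1" "i \<in> {1, 2}" "w = 1 - (u\<^sup>2 + v\<^sup>2)"
  shows "pd i (hmetric a j l) (u, v) =
           (if j = l then 16 * (if i = 1 then u else v) / (a\<^sup>2 * w ^ 3) else 0)"
proof (cases "j = l")
  case True
  have w: "1 - (u\<^sup>2 + v\<^sup>2) \<noteq> 0" "1 - (v\<^sup>2 + u\<^sup>2) \<noteq> 0" using assms(2) by simp_all
  have "i = 1 \<or> i = 2" using assms(3) by auto
  then show ?thesis
    using True assms(4) w
      DERIV_imp_deriv[OF conformal_factor_has_derivative[OF assms(1) w(1)]]
      DERIV_imp_deriv[OF conformal_factor_has_derivative[OF assms(1) w(2)]]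
    by (auto simp: pd_def hmetric_def add.commute)
qed (simp add: pd_def hmetric_def)

lemma christoffel_disc:
  assumes "a \<noteq> 0" "u\<^sup>2 + v\<^sup>2 < 1" "w = 1 - (u\<^sup>2 + v\<^sup>2)"
    and "k \<in> {1, 2}" "i \<in> {1, 2}" "j \<in> {1, 2}"
  shows "christoffel a k i j (u, v) = 2 / w *
     ((if j = k then (if i = 1 then u else v) else 0)
      + (if i = k then (if j = 1 then u else v) else 0)
      - (if i = j then (if k = 1 then u else v) else 0))"
proof -
  have w: "w > 0" using assms(2,3) by simp
  have scaled_pd: "a\<^sup>2 * w ^ 3 / 16 * pd i' (hmetric a j' l) (u, v) =
                     (if j' = l then (if i' = 1 then u else v) else 0)"
    if "i' \<in> {1, 2}" for i' j' l
    using pd_hmetric_disc[OF assms(1,2) that assms(3)] w assms(1) by simp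
  have "christoffel a k i j (u, v) = (1/2) * (a\<^sup>2 * w\<^sup>2 / 4) *
      (pd i (hmetric a j k) (u, v) + pd j (hmetric a i k) (u, v) - pd k (hmetric a i j) (u, v))"
    unfolding christoffel_def using assms(4) by (auto simp: hmetric_inv_disc[OF assms(3)])
  also have "\<dots> = 2 / w * (a\<^sup>2 * w ^ 3 / 16 * pd i (hmetric a j k) (u, v)
      + a\<^sup>2 * w ^ 3 / 16 * pd j (hmetric a i k) (u, v) - a\<^sup>2 * w ^ 3 / 16 * pd k (hmetric a i j) (u, v))"
    using w by (simp add: field_simps power2_eq_square power3_eq_cube)
  finally show ?thesis
    unfolding scaled_pd[OF assms(4)] scaled_pd[OF assms(5)] scaled_pd[OF assms(6)] .
qed

lemma cov_hess_disc:
  assumes "a \<noteq> 0" "u\<^sup>2 + v\<^sup>2 < 1" "w = 1 - (u\<^sup>2 + v\<^sup>2)"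
  shows "w * cov_hess a f 1 1 (u, v) = w * pd 1 (pd 1 f) (u, v) - 2 * (u * pd 1 f (u, v) - v * pd 2 f (u, v))"
    and "w * cov_hess a f 1 2 (u, v) = w * pd 1 (pd 2 f) (u, v) - 2 * (v * pd 1 f (u, v) + u * pd 2 f (u, v))"
    and "w * cov_hess a f 2 1 (u, v) = w * pd 2 (pd 1 f) (u, v) - 2 * (v * pd 1 f (u, v) + u * pd 2 f (u, v))"
    and "w * cov_hess a f 2 2 (u, v) = w * pd 2 (pd 2 f) (u, v) - 2 * (v * pd 2 f (u, v) - u * pd 1 f (u, v))"
  using assms(2,3) unfolding cov_hess_def by (simp_all add: christoffel_disc[OF assms] field_simps)

lemma hess11_normsq_vol_density_disc:
  assumes "a \<noteq> 0" "u\<^sup>2 + v\<^sup>2 < 1" "w = 1 - (u\<^sup>2 + v\<^sup>2)"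
  shows "hess11_normsq a f (u, v) * vol_density a (u, v)
           = a\<^sup>2 / 4 * (\<Sum>i\<in>{1,2}. \<Sum>j\<in>{1,2}. (w * cov_hess a f i j (u, v))\<^sup>2)"
proof -
  have w: "w > 0" using assms(2,3) by simp
  have hess11: "hess11 a f i j (u, v) = a\<^sup>2 * w\<^sup>2 / 4 * cov_hess a f i j (u, v)" if "i \<in> {1, 2}" for i j
    using that unfolding hess11_def by (auto simp: hmetric_inv_disc[OF assms(3)])
  have "vol_density a (u, v) = sqrt ((4 / (a\<^sup>2 * w\<^sup>2))\<^sup>2)"
    unfolding vol_density_def by (simp add: hmetric_disc[OF assms(3)] power2_eq_square)
  also have "\<dots> = 4 / (a\<^sup>2 * w\<^sup>2)" using w assms(1) by simp
  finally have vol: "vol_density a (u, v) = 4 / (a\<^sup>2 * w\<^sup>2)" .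
  show ?thesis
    unfolding hess11_normsq_def vol using w assms(1)
    by (simp add: hess11 hmetric_disc[OF assms(3)] hmetric_inv_disc[OF assms(3)] field_simps power2_eq_square)
qed

lemma square_diff_le: "(x - y)\<^sup>2 \<le> 2 * x\<^sup>2 + 2 * (y::real)\<^sup>2"
  and square_sum_le: "(x + y)\<^sup>2 \<le> 2 * x\<^sup>2 + 2 * (y::real)\<^sup>2"
  using sum_squares_ge_zero[of "x + y" 0] sum_squares_ge_zero[of "x - y" 0]
  by (simp_all add: power2_eq_square algebra_simps)

lemma scaled_cov_hess_sq_le:
  assumes "a \<noteq> 0" "u\<^sup>2 + v\<^sup>2 < 1" "w = 1 - (u\<^sup>2 + v\<^sup>2)"
  shows "(\<Sum>i\<in>{1,2}. \<Sum>j\<in>{1,2}. (w * cov_hess a f i j (u, v))\<^sup>2)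
           \<le> 2 * (w\<^sup>2 * eucl_hess_sq f (u, v)) + 16 * eucl_grad_sq f (u, v)"
proof -
  define p1 p2 where "p1 = pd 1 f (u, v)" and "p2 = pd 2 f (u, v)"
  define A B where "A = u * p1 - v * p2" and "B = v * p1 + u * p2"
  have cov: "w * cov_hess a f 1 1 (u, v) = w * pd 1 (pd 1 f) (u, v) - 2 * A"
    "w * cov_hess a f 1 2 (u, v) = w * pd 1 (pd 2 f) (u, v) - 2 * B"
    "w * cov_hess a f 2 1 (u, v) = w * pd 2 (pd 1 f) (u, v) - 2 * B"
    "w * cov_hess a f 2 2 (u, v) = w * pd 2 (pd 2 f) (u, v) - 2 * (- A)"
    using cov_hess_disc[OF assms, of f] by (simp_all add: A_def B_def p1_def p2_def)
  have "(w * cov_hess a f 1 1 (u, v))\<^sup>2 \<le> 2 * w\<^sup>2 * (pd 1 (pd 1 f) (u, v))\<^sup>2 + 8 * A\<^sup>2"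
    "(w * cov_hess a f 1 2 (u, v))\<^sup>2 \<le> 2 * w\<^sup>2 * (pd 1 (pd 2 f) (u, v))\<^sup>2 + 8 * B\<^sup>2"
    "(w * cov_hess a f 2 1 (u, v))\<^sup>2 \<le> 2 * w\<^sup>2 * (pd 2 (pd 1 f) (u, v))\<^sup>2 + 8 * B\<^sup>2"
    "(w * cov_hess a f 2 2 (u, v))\<^sup>2 \<le> 2 * w\<^sup>2 * (pd 2 (pd 2 f) (u, v))\<^sup>2 + 8 * A\<^sup>2"
    unfolding cov
    by (simp_all add: square_diff_le[THEN order_trans] square_sum_le[THEN order_trans] power_mult_distrib)
  then have "(\<Sum>i\<in>{1,2}. \<Sum>j\<in>{1,2}. (w * cov_hess a f i j (u, v))\<^sup>2)
               \<le> 2 * (w\<^sup>2 * eucl_hess_sq f (u, v)) + 16 * (A\<^sup>2 + B\<^sup>2)"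
    by (simp add: eucl_hess_sq_def algebra_simps)
  also have "A\<^sup>2 + B\<^sup>2 = (u\<^sup>2 + v\<^sup>2) * (p1\<^sup>2 + p2\<^sup>2)"
    unfolding A_def B_def power2_eq_square by algebra
  also have "\<dots> \<le> eucl_grad_sq f (u, v)"
    using assms(2) by (simp add: eucl_grad_sq_def p1_def p2_def mult_left_le_one_le)
  finally show ?thesis by simp
qed

lemma hess11_normsq_vol_density_le:
  assumes "a > 0" "y \<in> unit_disc"
  shows "hess11_normsq a f y * vol_density a y
           \<le> 10 * a\<^sup>2 * (eucl_grad_sq f y + (1 - ((fst y)\<^sup>2 + (snd y)\<^sup>2))\<^sup>2 * eucl_hess_sq f y)"
proof -
  obtain u v where y: "y = (u, v)" by fastforce
  define w where "w = 1 - (u\<^sup>2 + v\<^sup>2)"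
  have disc: "u\<^sup>2 + v\<^sup>2 < 1" using assms(2) y by (simp add: unit_disc_def)
  have a: "a \<noteq> 0" using assms(1) by simp
  have scale: "2 * Q + 16 * P \<le> 40 * (P + Q)" if "0 \<le> P" "0 \<le> Q" for P Q :: real
    using that by simp
  have "0 \<le> eucl_grad_sq f (u, v)" "0 \<le> w\<^sup>2 * eucl_hess_sq f (u, v)"
    unfolding eucl_hess_sq_def eucl_grad_sq_def by (auto intro: sum_nonneg)
  note scale = scale[OF this]
  have "hess11_normsq a f (u, v) * vol_density a (u, v)
          = a\<^sup>2 / 4 * (\<Sum>i\<in>{1,2}. \<Sum>j\<in>{1,2}. (w * cov_hess a f i j (u, v))\<^sup>2)"
    by (rule hess11_normsq_vol_density_disc[OF a disc w_def])
  also have "\<dots> \<le> a\<^sup>2 / 4 * (2 * (w\<^sup>2 * eucl_hess_sq f (u, v)) + 16 * eucl_grad_sq f (u, v))"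
    using scaled_cov_hess_sq_le[OF a disc w_def] by (rule mult_left_mono) simp
  also have "\<dots> \<le> a\<^sup>2 / 4 * (40 * (eucl_grad_sq f (u, v) + w\<^sup>2 * eucl_hess_sq f (u, v)))"
    using scale by (rule mult_left_mono) simp
  also have "\<dots> = 10 * a\<^sup>2 * (eucl_grad_sq f (u, v) + w\<^sup>2 * eucl_hess_sq f (u, v))"
    by simp
  finally show ?thesis
    unfolding y w_def by simp
qed

lemma borel_measurable_continuous_on_indicator_ennreal:
  fixes g :: "'a::topological_space \<Rightarrow> real"
  assumes "S \<in> sets borel" "continuous_on S g"
  shows "(\<lambda>x. ennreal (g x) * indicator S x) \<in> borel_measurable borel"
proof -
  have "(\<lambda>x. ennreal (indicator S x *\<^sub>R g x)) \<in> borel_measurable borel"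
    using borel_measurable_continuous_on_indicator[OF assms] by measurable
  also have "(\<lambda>x. ennreal (indicator S x *\<^sub>R g x)) = (\<lambda>x. ennreal (g x) * indicator S x)"
    by (auto simp: indicator_def)
  finally show ?thesis .
qed

lemma smooth_on_continuous_on_pd:
  assumes "smooth_on S g" "set ds \<subseteq> {1, 2}"
  shows "continuous_on S (iter_pd ds g)"
  using assms unfolding smooth_on_def by blast

lemma open_unit_disc: "open unit_disc"
  unfolding unit_disc_def by (intro open_Collect_less continuous_intros)

theorem lemma3p1:
  fixes a :: real and F :: "real \<times> real \<times> real \<Rightarrow> real" and f :: "real \<times> real \<Rightarrow> real"
  assumes "a > 0"
    and "f = F \<circ> inv_into (hyperboloid a) (chartY a)"
    and "smooth_on unit_disc f"
    and "(\<integral>\<^sup>+ y \<in> unit_disc. ennreal (eucl_grad_sq f y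
            + (1 - ((fst y)\<^sup>2 + (snd y)\<^sup>2))\<^sup>2 * eucl_hess_sq f y) \<partial>lborel) < \<infinity>"
  shows "(\<integral>\<^sup>+ y \<in> unit_disc. ennreal (hess11_normsq a f y * vol_density a y) \<partial>lborel)
         \<le> ennreal (10 * a\<^sup>2) * (\<integral>\<^sup>+ y \<in> unit_disc. ennreal (eucl_grad_sq f y
            + (1 - ((fst y)\<^sup>2 + (snd y)\<^sup>2))\<^sup>2 * eucl_hess_sq f y) \<partial>lborel)"
proof -
  \<comment> \<open>Only the chart description of f is used, and the inequality holds in [0, \<infinity>].\<close>
  define G where "G y = eucl_grad_sq f y + (1 - ((fst y)\<^sup>2 + (snd y)\<^sup>2))\<^sup>2 * eucl_hess_sq f y" for y
  have "G y \<ge> 0" for y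
    unfolding G_def eucl_grad_sq_def eucl_hess_sq_def by (auto intro!: add_nonneg_nonneg sum_nonneg)
  then have "ennreal (hess11_normsq a f y * vol_density a y) * indicator unit_disc y
               \<le> ennreal (10 * a\<^sup>2) * (ennreal (G y) * indicator unit_disc y)" for y
    using hess11_normsq_vol_density_le[OF assms(1), of y f, folded G_def]
    by (cases "y \<in> unit_disc") (auto simp: ennreal_mult[symmetric] intro!: ennreal_leI)
  then have "(\<integral>\<^sup>+ y \<in> unit_disc. ennreal (hess11_normsq a f y * vol_density a y) \<partial>lborel)
             \<le> (\<integral>\<^sup>+ y. ennreal (10 * a\<^sup>2) * (ennreal (G y) * indicator unit_disc y) \<partial>lborel)"
    by (rule nn_integral_mono)
  moreover have "continuous_on unit_disc G"
    using smooth_on_continuous_on_pd[OF assms(3), of "[_]"] smooth_on_continuous_on_pd[OF assms(3), of "[_, _]"]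
    unfolding G_def eucl_grad_sq_def eucl_hess_sq_def by (intro continuous_intros) auto
  then have "(\<lambda>y. ennreal (G y) * indicator unit_disc y) \<in> borel_measurable lborel"
    unfolding measurable_lborel2
    by (intro borel_measurable_continuous_on_indicator_ennreal) (simp_all add: open_unit_disc)
  ultimately show ?thesis
    by (simp add: nn_integral_cmult G_def)
qed

end
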